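(* Let $\mathcal D$ be a $k$-oriented Spherical Diagram. If two arcs $a,b\in\mathcal D$ that do not lie on a common great circle have a common vanishing point, then the great circle containing $a$ does not intersect $b$, and the great circle containing $b$ does not intersect $a$.
   Context: A geodesic arc on the unit sphere in $\mathbb R^3$ is the unique shortest curve joining two non-antipodal points. An arc $a$ blocks an arc $b$ (equivalently, $b$ hits $a$) if an endpoint of $b$ lies in the relative interior of $a$. A Spherical Diagram (SD) is a finite non-empty collection $\mathcal D$ of pairwise interior-disjoint geodesic arcs on the unit sphere such that each arc of $\mathcal D$ is blocked by arcs of $\mathcal D$ at each of its endpoints. An SD $\mathcal D$ is $k$-oriented if there exist a set $P$ of $k$ points on the unit sphere (poles), no two antipodal, and a function $f\colon\mathcal D\to P$ such that each arc $a\in\mathcal D$ lies on a great circle through $f(a)$ but contains neither $f(a)$ nor its antipode $-f(a)$. The two points $f(a)$ and $-f(a)$ are the vanishing points of $a$. *)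

theory Defs
  imports "HOL-Analysis.Analysis"
begin

type_synonym point = "real^3"
type_synonym arc = "point \<times> point"

definition on_sphere :: "point \<Rightarrow> bool" where
  "on_sphere x \<longleftrightarrow> norm x = 1"

definition geodesic_arc :: "arc \<Rightarrow> bool" where
  "geodesic_arc a \<longleftrightarrow> on_sphere (fst a) \<and> on_sphere (snd a) \<and>
     fst a \<noteq> snd a \<and> fst a \<noteq> - snd a"

definition arc_set :: "arc \<Rightarrow> point set" where
  "arc_set a = {x. on_sphere x \<and>
     (\<exists>u v. u \<ge> 0 \<and> v \<ge> 0 \<and> x = u *\<^sub>R fst a + v *\<^sub>R snd a)}"

definition arc_relint :: "arc \<Rightarrow> point set" where
  "arc_relint a = {x. on_sphere x \<and>
     (\<exists>u v. u > 0 \<and> v > 0 \<and> x = u *\<^sub>R fst a + v *\<^sub>R snd a)}"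

definition great_circle :: "arc \<Rightarrow> point set" where
  "great_circle a = {x. on_sphere x \<and> x \<in> span {fst a, snd a}}"

definition blocks :: "arc \<Rightarrow> arc \<Rightarrow> bool" where
  "blocks a b \<longleftrightarrow> fst b \<in> arc_relint a \<or> snd b \<in> arc_relint a"

definition spherical_diagram :: "arc set \<Rightarrow> bool" where
  "spherical_diagram D \<longleftrightarrow> finite D \<and> D \<noteq> {} \<and>
     (\<forall>a\<in>D. geodesic_arc a) \<and>
     (\<forall>a\<in>D. \<forall>b\<in>D. a \<noteq> b \<longrightarrow> arc_relint a \<inter> arc_relint b = {}) \<and>
     (\<forall>b\<in>D. (\<exists>a\<in>D. fst b \<in> arc_relint a) \<and> (\<exists>a\<in>D. snd b \<in> arc_relint a))"

definition k_oriented_by :: "arc set \<Rightarrow> nat \<Rightarrow> point set \<Rightarrow> (arc \<Rightarrow> point) \<Rightarrow> bool" where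
  "k_oriented_by D k P f \<longleftrightarrow> spherical_diagram D \<and>
     finite P \<and> card P = k \<and> (\<forall>p\<in>P. on_sphere p) \<and>
     (\<forall>p\<in>P. \<forall>q\<in>P. p \<noteq> - q) \<and>
     (\<forall>a\<in>D. f a \<in> P \<and> f a \<in> great_circle a \<and>
        f a \<notin> arc_set a \<and> - f a \<notin> arc_set a)"

definition k_oriented :: "arc set \<Rightarrow> nat \<Rightarrow> bool" where
  "k_oriented D k \<longleftrightarrow> (\<exists>P f. k_oriented_by D k P f)"

definition vanishing_points :: "(arc \<Rightarrow> point) \<Rightarrow> arc \<Rightarrow> point set" where
  "vanishing_points f a = {f a, - f a}"

end

theory Submission
  imports Defs
begin

text \<open>Two distinct great circles through a common point p meet exactly in p and -p, since a
  plane through the origin is spanned by any two of its unit vectors that are neither equal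
  nor antipodal. A shared vanishing point forces a common pole, because no two poles are
  antipodal; the pole lies on both great circles but neither it nor its antipode lies on the
  arcs, so the arcs avoid the intersection of the two circles.\<close>

lemma geodesic_arc_independent:
  assumes "geodesic_arc a"
  shows "independent {fst a, snd a}"
proof -
  have norms: "norm (fst a) = 1" "norm (snd a) = 1"
    using assms by (auto simp: geodesic_arc_def on_sphere_def)
  then have nonzero: "snd a \<noteq> 0"
    by auto
  have "fst a \<notin> span {snd a}"
  proof
    assume "fst a \<in> span {snd a}"
    then obtain c where c: "fst a = c *\<^sub>R snd a"
      by (auto simp: span_singleton)
    then have "\<bar>c\<bar> = 1"
      using arg_cong[OF c, of norm] norms by simp
    then have "c = 1 \<or> c = -1"
      by linarith
    then show False
      using c assms by (auto simp: geodesic_arc_def)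
  qed
  then show ?thesis
    using nonzero assms by (simp add: independent_insert geodesic_arc_def)
qed

lemma geodesic_arc_dim_span:
  assumes "geodesic_arc a"
  shows "dim (span {fst a, snd a}) = 2"
  using dim_span_eq_card_independent[OF geodesic_arc_independent[OF assms]] assms
  by (simp add: geodesic_arc_def)

lemma arc_set_subset_great_circle: "arc_set a \<subseteq> great_circle a"
proof
  fix x
  assume "x \<in> arc_set a"
  then obtain u v where "on_sphere x" "x = u *\<^sub>R fst a + v *\<^sub>R snd a"
    by (auto simp: arc_set_def)
  moreover have "u *\<^sub>R fst a + v *\<^sub>R snd a \<in> span {fst a, snd a}"
    by (intro span_add span_mul span_base) auto
  ultimately show "x \<in> great_circle a"
    by (simp add: great_circle_def)
qed

lemma great_circle_eq_if_endpoints_mem: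
  assumes "geodesic_arc c" "geodesic_arc a"
    and "fst c \<in> great_circle a" "snd c \<in> great_circle a"
  shows "great_circle c = great_circle a"
proof -
  have "span {fst c, snd c} \<subseteq> span {fst a, snd a}"
    using assms(3,4) by (simp add: great_circle_def span_minimal)
  then have "span {fst c, snd c} = span {fst a, snd a}"
    using subspace_dim_equal[of "span {fst c, snd c}" "span {fst a, snd a}"]
      geodesic_arc_dim_span[OF assms(1)] geodesic_arc_dim_span[OF assms(2)]
    by simp
  then show ?thesis
    by (simp add: great_circle_def)
qed

lemma great_circles_inter:
  assumes "geodesic_arc a" "geodesic_arc b"
    and "great_circle a \<noteq> great_circle b"
    and "p \<in> great_circle a" "p \<in> great_circle b"
  shows "great_circle a \<inter> great_circle b = {p, - p}"
proof
  show "great_circle a \<inter> great_circle b \<subseteq> {p, - p}"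
  proof
    fix x
    assume x: "x \<in> great_circle a \<inter> great_circle b"
    show "x \<in> {p, - p}"
    proof (rule ccontr)
      assume "x \<notin> {p, - p}"
      with x assms(4) have xp: "geodesic_arc (x, p)"
        by (auto simp: geodesic_arc_def great_circle_def)
      have "great_circle (x, p) = great_circle a"
        using great_circle_eq_if_endpoints_mem[OF xp assms(1)] x assms(4) by simp
      moreover have "great_circle (x, p) = great_circle b"
        using great_circle_eq_if_endpoints_mem[OF xp assms(2)] x assms(5) by simp
      ultimately show False
        using assms(3) by simp
    qed
  qed
  show "{p, - p} \<subseteq> great_circle a \<inter> great_circle b"
    using assms(4,5) by (auto simp: great_circle_def on_sphere_def span_neg)
qed

lemma great_circle_inter_arc_set_empty:
  assumes "geodesic_arc a" "geodesic_arc b"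
    and "great_circle a \<noteq> great_circle b"
    and "p \<in> great_circle a" "p \<in> great_circle b"
    and "p \<notin> arc_set b" "- p \<notin> arc_set b"
  shows "great_circle a \<inter> arc_set b = {}"
  using great_circles_inter[OF assms(1-5)] arc_set_subset_great_circle[of b] assms(6,7)
  by auto

lemma k_oriented_by_common_vanishing_point:
  assumes "k_oriented_by D k P f" "a \<in> D" "b \<in> D"
    and "vanishing_points f a \<inter> vanishing_points f b \<noteq> {}"
  shows "f a = f b"
proof -
  have "f a \<noteq> - f b"
    using assms(1-3) by (auto simp: k_oriented_by_def)
  then show ?thesis
    using assms(4) by (auto simp: vanishing_points_def)
qed

theorem mainTheorem9:
  assumes "k_oriented_by D k P f"
    and "a \<in> D" and "b \<in> D"
    and "great_circle a \<noteq> great_circle b"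
    and "vanishing_points f a \<inter> vanishing_points f b \<noteq> {}"
  shows "great_circle a \<inter> arc_set b = {} \<and> great_circle b \<inter> arc_set a = {}"
proof -
  have arcs: "geodesic_arc a" "geodesic_arc b"
    using assms(1-3) by (auto simp: k_oriented_by_def spherical_diagram_def)
  have pole_a: "f a \<in> great_circle a" "f a \<notin> arc_set a" "- f a \<notin> arc_set a"
    and pole_b: "f b \<in> great_circle b" "f b \<notin> arc_set b" "- f b \<notin> arc_set b"
    using assms(1-3) by (auto simp: k_oriented_by_def)
  have "f a = f b"
    using k_oriented_by_common_vanishing_point assms(1,2,3,5) .
  then show ?thesis
    using great_circle_inter_arc_set_empty[OF arcs assms(4)]
      great_circle_inter_arc_set_empty[OF arcs(2,1) assms(4)[symmetric]] pole_a pole_b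
    by auto
qed

end
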